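(* Let ${\bf r}=(r_0,r_1,\dots)$ be a finitely supported sequence of nonnegative integers with $n=\sum_{d\ge1}r_d\ge1$ and $\ell=-\sum_{d\ge0}(d-1)r_d\ge1$, let $k\ge0$ be an integer, and let ${\bf S}\in V_{\bf r}$. Let $\mathcal{CF}_{{\bf r},k,{\bf S},1}$ be the set of forests in $\mathcal{CF}_{{\bf r},k,{\bf S}}$ in which the internal vertex with label $1$ lies in the first tree. Then $$|\mathcal{CF}_{{\bf r},k,{\bf S},1}|=1^{r_1}2^{r_2}3^{r_3}\cdots\prod_{i=1}^{n-1}\big(r_0+i(1+k)\big).$$
   Context: A plane tree is an unlabelled rooted tree in which the children of every vertex are linearly ordered; a plane forest is a finite linearly ordered sequence of plane trees (so it has a first tree). For vertices $u,v$ in a tree, $v$ is a descendant of $u$ if $u$ lies on the path from the root to $v$ (so $u$ is a descendant of itself). The degree $d_v$ is the number of children of $v$; $v$ is internal if $d_v\ge1$. $I(F)$ is the set of internal vertices of $F$. A plane forest has type ${\bf r}$ if it has exactly $r_i$ vertices of degree $i$ for all $i\ge0$. A labelled forest is a plane forest $F$ together with a bijection (labelling) $I(F)\to[n]$. An internal vertex $v$ of a labelled forest is proper if no internal descendant of $v$ has a smaller label than $v$, and improper otherwise. Fix colors $c_1,c_2,\dots$ and distinct special colors $c_1',c_2',\dots$. A proper $k$-coloring of a labelled forest assigns to each internal vertex $v$ a color, taken from $\{c_1,\dots,c_{d_v}\}$ if $v$ is proper and from $\{c_1,\dots,c_{d_v}\}\cup\{c_1',\dots,c_k'\}$ if $v$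 is improper. A $k$-colored labelled forest is a labelled forest together with a proper $k$-coloring; $\mathcal{CF}_{{\bf r},k}$ is the set of $k$-colored labelled forests whose underlying plane forest has type ${\bf r}$. $V_{\bf r}$ is the set of sequences ${\bf S}=(S_1,S_2,\dots)$ of pairwise disjoint subsets of $[n]$ with union $[n]$ and $|S_i|=r_i$ for all $i\ge1$. For ${\bf S}\in V_{\bf r}$, $\mathcal{CF}_{{\bf r},k,{\bf S}}$ is the set of forests in $\mathcal{CF}_{{\bf r},k}$ in which every internal vertex $v$ has its label in $S_{d_v}$. *)

theory Defs
  imports Main "HOL-Library.Sublist"
begin

text \<open>Plane trees: a vertex together with the linearly ordered list of its subtrees.
A plane forest is a list of plane trees.\<close>
datatype ptree = Node "ptree list"

fun kids :: "ptree \<Rightarrow> ptree list" where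
  "kids (Node cs) = cs"

text \<open>Vertices are addressed by paths: the subtree reached from a tree by a list of
child indices.\<close>
fun subtree :: "ptree \<Rightarrow> nat list \<Rightarrow> ptree option" where
  "subtree t [] = Some t"
| "subtree (Node cs) (i # p) = (if i < length cs then subtree (cs ! i) p else None)"

text \<open>In a forest a vertex is addressed by (index of its tree) # (path inside that tree).\<close>
fun fsub :: "ptree list \<Rightarrow> nat list \<Rightarrow> ptree option" where
  "fsub F [] = None"
| "fsub F (i # p) = (if i < length F then subtree (F ! i) p else None)"

definition verts :: "ptree list \<Rightarrow> nat list set" where
  "verts F = {v. fsub F v \<noteq> None}"

definition deg :: "ptree list \<Rightarrow> nat list \<Rightarrow> nat" where
  "deg F v = (case fsub F v of Some t \<Rightarrow> length (kids t) | None \<Rightarrow> 0)"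

definition internal :: "ptree list \<Rightarrow> nat list set" where
  "internal F = {v \<in> verts F. 1 \<le> deg F v}"

definition descendant :: "nat list \<Rightarrow> nat list \<Rightarrow> bool" where
  "descendant v u \<longleftrightarrow> prefix u v"

definition has_type :: "ptree list \<Rightarrow> (nat \<Rightarrow> nat) \<Rightarrow> bool" where
  "has_type F r \<longleftrightarrow> (\<forall>i. card {v \<in> verts F. deg F v = i} = r i)"

definition labelling :: "ptree list \<Rightarrow> nat \<Rightarrow> (nat list \<Rightarrow> nat) \<Rightarrow> bool" where
  "labelling F n L \<longleftrightarrow> bij_betw L (internal F) {1..n} \<and> (\<forall>v. v \<notin> internal F \<longrightarrow> L v = 0)"

definition proper_vertex :: "ptree list \<Rightarrow> (nat list \<Rightarrow> nat) \<Rightarrow> nat list \<Rightarrow> bool" where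
  "proper_vertex F L v \<longleftrightarrow> (\<forall>w \<in> internal F. descendant w v \<longrightarrow> L v \<le> L w)"

text \<open>Colours c_j (Col j) and special colours c'_j (Col' j).\<close>
datatype colour = Col nat | Col' nat

definition proper_colouring ::
  "ptree list \<Rightarrow> (nat list \<Rightarrow> nat) \<Rightarrow> nat \<Rightarrow> (nat list \<Rightarrow> colour) \<Rightarrow> bool" where
  "proper_colouring F L k c \<longleftrightarrow>
     (\<forall>v \<in> internal F.
        (proper_vertex F L v \<longrightarrow> c v \<in> Col ` {1..deg F v}) \<and>
        (\<not> proper_vertex F L v \<longrightarrow> c v \<in> Col ` {1..deg F v} \<union> Col' ` {1..k}))
     \<and> (\<forall>v. v \<notin> internal F \<longrightarrow> c v = Col 0)"

definition nint :: "(nat \<Rightarrow> nat) \<Rightarrow> nat" where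
  "nint r = (\<Sum>d \<in> {d. 1 \<le> d \<and> r d \<noteq> 0}. r d)"

definition CF :: "(nat \<Rightarrow> nat) \<Rightarrow> nat \<Rightarrow>
    (ptree list \<times> (nat list \<Rightarrow> nat) \<times> (nat list \<Rightarrow> colour)) set" where
  "CF r k = {(F, L, c). has_type F r \<and> labelling F (nint r) L \<and> proper_colouring F L k c}"

text \<open>V_r: sequences (S_1, S_2, ...) represented as S :: nat \<Rightarrow> nat set with S 0 = {}.\<close>
definition V :: "(nat \<Rightarrow> nat) \<Rightarrow> (nat \<Rightarrow> nat set) set" where
  "V r = {S. S 0 = {} \<and> (\<forall>i j. 1 \<le> i \<longrightarrow> 1 \<le> j \<longrightarrow> i \<noteq> j \<longrightarrow> S i \<inter> S j = {})
            \<and> (\<Union>i \<in> {i. 1 \<le> i}. S i) = {1..nint r}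
            \<and> (\<forall>i. 1 \<le> i \<longrightarrow> card (S i) = r i)}"

definition CFS :: "(nat \<Rightarrow> nat) \<Rightarrow> nat \<Rightarrow> (nat \<Rightarrow> nat set) \<Rightarrow>
    (ptree list \<times> (nat list \<Rightarrow> nat) \<times> (nat list \<Rightarrow> colour)) set" where
  "CFS r k S = {(F, L, c) \<in> CF r k. \<forall>v \<in> internal F. L v \<in> S (deg F v)}"

definition CFS1 :: "(nat \<Rightarrow> nat) \<Rightarrow> nat \<Rightarrow> (nat \<Rightarrow> nat set) \<Rightarrow>
    (ptree list \<times> (nat list \<Rightarrow> nat) \<times> (nat list \<Rightarrow> colour)) set" where
  "CFS1 r k S = {(F, L, c) \<in> CFS r k S. \<forall>v \<in> internal F. L v = 1 \<longrightarrow> hd v = 0}"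

end

theory Submission
  imports Defs "HOL-Combinatorics.Transposition"
begin

text \<open>Generalise from the type \<open>r\<close> and the blocks \<open>S\<close> to coloured forests with \<open>r0\<close>
  leaves whose labels form an arbitrary finite set \<open>\<Lambda>\<close>, a vertex labelled \<open>x\<close> having \<open>D x\<close>
  children; such a forest has \<open>l \<Lambda> = r0 + |\<Lambda>| - (\<Sum>x\<in>\<Lambda>. D x)\<close> trees. Let \<open>Q \<Lambda>\<close> be the
  set of those whose least label lies in the first tree.

  Deleting the root of the first tree, labelled \<open>a\<close> say, leaves a forest on \<open>\<Lambda> - {a}\<close> whose
  first \<open>D a\<close> trees are the former subtrees of the root. As the least label lies in the first
  tree, the root is proper exactly when \<open>a = \<mu> = Min \<Lambda>\<close>; otherwise \<open>\<mu>\<close> lies below the root,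
  i.e.\ in one of the first \<open>D a\<close> trees of the smaller forest. Exchanging the first tree with
  any other shows that each of the \<open>l\<close> trees holds the least label equally often, whence
  \<open>|Q \<Lambda>| = D \<mu> * l (\<Lambda> - {\<mu>}) * |Q (\<Lambda> - {\<mu>})| + (\<Sum>a\<in>\<Lambda> - {\<mu>}. (D a + k) * D a * |Q (\<Lambda> - {a})|)\<close>.
  By induction \<open>|Q (\<Lambda> - {a})| = (\<Prod>x\<in>\<Lambda> - {a}. D x) * P\<close> with \<open>P\<close> independent of \<open>a\<close>, and
  \<open>l (\<Lambda> - {\<mu>}) + (\<Sum>a\<in>\<Lambda> - {\<mu>}. D a + k) = r0 + (|\<Lambda>| - 1) * (1 + k)\<close> is the next factor of
  the product.\<close>

section \<open>Addresses in plane forests\<close>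

lemma fsub_Nil_forest [simp]: "fsub [] v = None"
  by (cases v) auto

lemma Nil_notin_verts [simp]: "[] \<notin> verts F"
  unfolding verts_def by simp

lemma verts_hd_less_length: "v \<in> verts F \<Longrightarrow> v \<noteq> [] \<and> hd v < length F"
  unfolding verts_def by (cases v) (auto split: if_splits)

lemma internal_imp_verts: "v \<in> internal F \<Longrightarrow> v \<in> verts F"
  unfolding internal_def by simp

lemma internal_nonempty: "v \<in> internal F \<Longrightarrow> v \<noteq> []"
  unfolding internal_def by auto

text \<open>Joining the first \<open>m\<close> trees of a forest under a new root turns \<open>cs @ rest\<close>
  (with \<open>length cs = m\<close>) into \<open>Node cs # rest\<close>; \<open>graft_addr m\<close> moves the addresses along.\<close>

fun graft_addr :: "nat \<Rightarrow> nat list \<Rightarrow> nat list" where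
  "graft_addr m [] = []"
| "graft_addr m (i # p) = (if i < m then 0 # i # p else Suc (i - m) # p)"

fun ungraft_addr :: "nat \<Rightarrow> nat list \<Rightarrow> nat list" where
  "ungraft_addr m (0 # i # p) = i # p"
| "ungraft_addr m (Suc j # p) = (j + m) # p"
| "ungraft_addr m _ = []"

lemma ungraft_graft_addr [simp]: "ungraft_addr m (graft_addr m v) = v"
  by (cases v) auto

lemma inj_graft_addr: "inj (graft_addr m)"
  by (metis injI ungraft_graft_addr)

lemma graft_addr_neq_root [simp]: "graft_addr m v \<noteq> [0]"
  by (cases v) auto

lemma root_notin_graft_addr_image [simp]: "[0] \<notin> graft_addr m ` A"
  by (metis graft_addr_neq_root imageE)

lemma hd_graft_addr_eq_0_iff: "v \<noteq> [] \<Longrightarrow> hd (graft_addr m v) = 0 \<longleftrightarrow> hd v < m"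
  by (cases v) auto

lemma prefix_graft_addr_iff: "prefix (graft_addr m u) (graft_addr m v) \<longleftrightarrow> prefix u v"
  by (cases u; cases v) auto

lemma graft_addr_not_prefix_root: "u \<noteq> [] \<Longrightarrow> \<not> prefix (graft_addr m u) [0]"
  by (cases u) auto

lemma fsub_graft_addr: "fsub (Node cs # rest) (graft_addr (length cs) v) = fsub (cs @ rest) v"
  by (cases v) (auto simp: nth_append)

definition graft_fun :: "nat \<Rightarrow> 'a \<Rightarrow> (nat list \<Rightarrow> 'a) \<Rightarrow> 'a \<Rightarrow> nat list \<Rightarrow> 'a" where
  "graft_fun m x f z w =
     (if w = [0] then x else if w \<in> range (graft_addr m) then f (ungraft_addr m w) else z)"

lemma graft_fun_root [simp]: "graft_fun m x f z [0] = x"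
  by (simp add: graft_fun_def)

lemma graft_fun_comp_graft_addr [simp]: "graft_fun m x f z \<circ> graft_addr m = f"
  by (rule ext) (simp add: graft_fun_def)

lemma graft_fun_eq_iff:
  "graft_fun m x f z = h \<longleftrightarrow>
     h [0] = x \<and> h \<circ> graft_addr m = f \<and> (\<forall>w. w \<notin> range (graft_addr m) \<and> w \<noteq> [0] \<longrightarrow> h w = z)"
proof
  assume h: "h [0] = x \<and> h \<circ> graft_addr m = f \<and> (\<forall>w. w \<notin> range (graft_addr m) \<and> w \<noteq> [0] \<longrightarrow> h w = z)"
  show "graft_fun m x f z = h"
  proof
    fix w
    show "graft_fun m x f z w = h w"
    proof (cases "w \<in> range (graft_addr m)")
      case True
      then obtain v where "w = graft_addr m v" by blast
      then show ?thesis using h by (auto simp: graft_fun_def)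
    next
      case False
      then show ?thesis using h by (auto simp: graft_fun_def)
    qed
  qed
next
  assume "graft_fun m x f z = h"
  then show "h [0] = x \<and> h \<circ> graft_addr m = f \<and> (\<forall>w. w \<notin> range (graft_addr m) \<and> w \<noteq> [0] \<longrightarrow> h w = z)"
    by (auto simp: graft_fun_def)
qed

lemma fsub_Cons_Node_in_range:
  assumes "fsub (Node cs # rest) w \<noteq> None" and "w \<noteq> [0]"
  shows "w \<in> range (graft_addr (length cs))"
proof -
  obtain j p where w: "w = j # p"
    using assms(1) by (cases w) auto
  show ?thesis
  proof (cases j)
    case 0
    then obtain i q where "p = i # q" and "i < length cs"
      using assms w by (cases p) (auto split: if_splits)
    then have "w = graft_addr (length cs) (i # q)"
      using w 0 by simp
    then show ?thesis by blast
  next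
    case (Suc j')
    then have "w = graft_addr (length cs) ((j' + length cs) # p)"
      using w by simp
    then show ?thesis by blast
  qed
qed

lemma verts_Cons_Node:
  "verts (Node cs # rest) = insert [0] (graft_addr (length cs) ` verts (cs @ rest))"
proof (intro set_eqI iffI)
  fix w assume w: "w \<in> verts (Node cs # rest)"
  show "w \<in> insert [0] (graft_addr (length cs) ` verts (cs @ rest))"
  proof (cases "w = [0]")
    case False
    then obtain v where "w = graft_addr (length cs) v"
      using w fsub_Cons_Node_in_range unfolding verts_def by blast
    then show ?thesis
      using w by (simp add: verts_def fsub_graft_addr)
  qed simp
qed (auto simp: verts_def fsub_graft_addr)

lemma deg_graft_addr: "deg (Node cs # rest) (graft_addr (length cs) v) = deg (cs @ rest) v"
  unfolding deg_def by (simp add: fsub_graft_addr)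

lemma deg_root: "deg (Node cs # rest) [0] = length cs"
  unfolding deg_def by simp

lemma internal_Cons_Node:
  assumes "cs \<noteq> []"
  shows "internal (Node cs # rest) = insert [0] (graft_addr (length cs) ` internal (cs @ rest))"
  using assms unfolding internal_def
  by (auto simp: verts_Cons_Node deg_graft_addr deg_root Suc_le_eq)

lemma leaves_Cons_Node:
  assumes "cs \<noteq> []"
  shows "card {v \<in> verts (Node cs # rest). deg (Node cs # rest) v = 0}
       = card {v \<in> verts (cs @ rest). deg (cs @ rest) v = 0}"
proof -
  have "{v \<in> verts (Node cs # rest). deg (Node cs # rest) v = 0}
      = graft_addr (length cs) ` {v \<in> verts (cs @ rest). deg (cs @ rest) v = 0}"
    using assms by (auto simp: verts_Cons_Node deg_graft_addr deg_root)
  then show ?thesis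
    by (simp add: card_image inj_on_subset[OF inj_graft_addr])
qed

lemma finite_verts_and_sum_deg:
  "finite (verts F) \<and> (\<Sum>v\<in>verts F. deg F v) + length F = card (verts F)"
proof (induction "size_list size F" arbitrary: F rule: less_induct)
  case less
  show ?case
  proof (cases F)
    case Nil
    then have "verts F = {}"
      unfolding verts_def by simp
    then show ?thesis using Nil by simp
  next
    case (Cons T rest)
    obtain cs where T: "T = Node cs" by (cases T)
    let ?F' = "cs @ rest" and ?g = "graft_addr (length cs)"
    have IH: "finite (verts ?F') \<and> (\<Sum>v\<in>verts ?F'. deg ?F' v) + length ?F' = card (verts ?F')"
      using less[of ?F'] Cons T by (simp add: size_list_append)
    have V: "verts F = insert [0] (?g ` verts ?F')"
      using Cons T verts_Cons_Node by simp
    have inj: "inj_on ?g (verts ?F')"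
      using inj_graft_addr by (rule inj_on_subset) simp
    have "(\<Sum>v\<in>verts F. deg F v) = deg F [0] + (\<Sum>v\<in>?g ` verts ?F'. deg F v)"
      using IH by (simp add: V)
    also have "\<dots> = length cs + (\<Sum>v\<in>verts ?F'. deg ?F' v)"
      using inj by (simp add: sum.reindex Cons T deg_graft_addr deg_root)
    finally have sum: "(\<Sum>v\<in>verts F. deg F v) = length cs + (\<Sum>v\<in>verts ?F'. deg ?F' v)" .
    have "card (verts F) = Suc (card (verts ?F'))"
      using IH inj by (simp add: V card_image)
    then show ?thesis
      using IH V Cons sum by simp
  qed
qed

lemma finite_verts: "finite (verts F)"
  using finite_verts_and_sum_deg by blast

lemma sum_deg_verts: "(\<Sum>v\<in>verts F. deg F v) + length F = card (verts F)"
  using finite_verts_and_sum_deg by blast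

lemma internal_empty_imp_replicate:
  assumes empty: "internal F = {}"
  shows "F = replicate (length F) (Node [])"
proof -
  have "F ! i = Node []" if "i < length F" for i
  proof (rule ccontr)
    assume "F ! i \<noteq> Node []"
    then obtain cs where "F ! i = Node cs" "cs \<noteq> []"
      by (cases "F ! i") auto
    then have "[i] \<in> internal F"
      using that unfolding internal_def verts_def deg_def by (auto simp: Suc_le_eq)
    then show False
      using empty by simp
  qed
  then show ?thesis
    by (simp add: list_eq_iff_nth_eq)
qed

lemma deg_replicate_leaf [simp]: "deg (replicate n (Node [])) v = 0"
proof (cases v)
  case (Cons i p)
  then show ?thesis
    unfolding deg_def by (cases p) (auto split: option.splits)
qed (simp add: deg_def)

fun swap_root_addr :: "nat \<Rightarrow> nat list \<Rightarrow> nat list" where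
  "swap_root_addr t [] = []"
| "swap_root_addr t (i # p) = transpose 0 t i # p"

definition swap_trees :: "nat \<Rightarrow> ptree list \<Rightarrow> ptree list" where
  "swap_trees t F = F[0 := F ! t, t := F ! 0]"

lemma swap_root_addr_involutory [simp]: "swap_root_addr t (swap_root_addr t v) = v"
  by (cases v) auto

lemma bij_swap_root_addr: "bij (swap_root_addr t)"
  by (rule involuntory_imp_bij) simp

lemma prefix_swap_root_addr_iff: "prefix (swap_root_addr t u) (swap_root_addr t v) \<longleftrightarrow> prefix u v"
  by (cases u; cases v) (auto dest: transpose_eq_imp_eq)

lemma length_swap_trees [simp]: "length (swap_trees t F) = length F"
  by (simp add: swap_trees_def)

lemma nth_swap_trees: "t < length F \<Longrightarrow> i < length F \<Longrightarrow> swap_trees t F ! i = F ! transpose 0 t i"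
  by (auto simp: swap_trees_def nth_list_update transpose_def)

lemma transpose_less: "i < n \<Longrightarrow> t < n \<Longrightarrow> transpose 0 t i < (n::nat)"
  by (auto simp: transpose_def)

lemma swap_trees_involutory: "t < length F \<Longrightarrow> swap_trees t (swap_trees t F) = F"
  by (rule nth_equalityI) (simp_all add: nth_swap_trees transpose_less)

lemma fsub_swap_trees: "t < length F \<Longrightarrow> fsub (swap_trees t F) v = fsub F (swap_root_addr t v)"
  by (cases v) (auto simp: nth_swap_trees transpose_def)

lemma fsub_transfer_verts_deg:
  assumes "\<And>v. fsub F' v = fsub F (h v)"
  shows "verts F' = h -` verts F" and "deg F' v = deg F (h v)"
  using assms unfolding verts_def deg_def by auto

lemma fsub_transfer_internal:
  assumes "\<And>v. fsub F' v = fsub F (h v)"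
  shows "internal F' = h -` internal F"
  unfolding internal_def fsub_transfer_verts_deg[OF assms] by auto

section \<open>Colourings and proper vertices\<close>

definition allowed_colours :: "ptree list \<Rightarrow> (nat list \<Rightarrow> nat) \<Rightarrow> nat \<Rightarrow> nat list \<Rightarrow> colour set" where
  "allowed_colours F L k v =
     (if proper_vertex F L v then Col ` {1..deg F v} else Col ` {1..deg F v} \<union> Col' ` {1..k})"

lemma proper_colouring_iff_allowed:
  "proper_colouring F L k c \<longleftrightarrow>
     (\<forall>v\<in>internal F. c v \<in> allowed_colours F L k v) \<and> (\<forall>v. v \<notin> internal F \<longrightarrow> c v = Col 0)"
  unfolding proper_colouring_def allowed_colours_def by auto

lemma fsub_transfer_proper_vertex:
  assumes "surj h" and "\<And>v. fsub F' v = fsub F (h v)"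
    and "\<And>u v. prefix (h u) (h v) \<longleftrightarrow> prefix u v"
  shows "proper_vertex F' (L \<circ> h) v \<longleftrightarrow> proper_vertex F L (h v)"
proof -
  have "proper_vertex F L (h v) \<longleftrightarrow>
      (\<forall>w. h w \<in> internal F \<longrightarrow> prefix (h v) (h w) \<longrightarrow> L (h v) \<le> L (h w))"
    unfolding proper_vertex_def descendant_def using assms(1) by (metis surjD)
  then show ?thesis
    unfolding proper_vertex_def descendant_def fsub_transfer_internal[OF assms(2)] assms(3) by auto
qed

lemma proper_vertex_graft_addr:
  assumes "cs \<noteq> []" and "v \<noteq> []"
  shows "proper_vertex (Node cs # rest) L (graft_addr (length cs) v)
     \<longleftrightarrow> proper_vertex (cs @ rest) (L \<circ> graft_addr (length cs)) v"
  using assms unfolding proper_vertex_def descendant_def internal_Cons_Node[OF assms(1)]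
  by (auto simp: prefix_graft_addr_iff graft_addr_not_prefix_root)

lemma allowed_colours_graft_addr:
  assumes "cs \<noteq> []" and "v \<noteq> []"
  shows "allowed_colours (Node cs # rest) L k (graft_addr (length cs) v)
     = allowed_colours (cs @ rest) (L \<circ> graft_addr (length cs)) k v"
  unfolding allowed_colours_def proper_vertex_graft_addr[OF assms] deg_graft_addr ..

lemma vanishes_outside_internal_Cons_Node:
  assumes "cs \<noteq> []"
  shows "(\<forall>v. v \<notin> internal (Node cs # rest) \<longrightarrow> f v = z) \<longleftrightarrow>
     (\<forall>v. v \<notin> internal (cs @ rest) \<longrightarrow> f (graft_addr (length cs) v) = z) \<and>
     (\<forall>w. w \<notin> range (graft_addr (length cs)) \<and> w \<noteq> [0] \<longrightarrow> f w = z)"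
  using inj_graft_addr[of "length cs"]
  by (auto simp: internal_Cons_Node[OF assms] inj_image_mem_iff) (metis image_eqI rangeE)

lemma bij_betw_Cons_Node:
  assumes "cs \<noteq> []"
  shows "bij_betw L (internal (Node cs # rest)) \<Lambda> \<longleftrightarrow>
     L [0] \<in> \<Lambda> \<and> bij_betw (L \<circ> graft_addr (length cs)) (internal (cs @ rest)) (\<Lambda> - {L [0]})"
proof -
  let ?g = "graft_addr (length cs)" and ?I' = "internal (cs @ rest)"
  have "inj_on (L \<circ> ?g) ?I' \<longleftrightarrow> inj_on L (?g ` ?I')"
    using inj_on_subset[OF inj_graft_addr] by (simp add: comp_inj_on_iff)
  moreover have "(L \<circ> ?g) ` ?I' = L ` ?g ` ?I'"
    by (simp add: image_comp)
  ultimately show ?thesis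
    unfolding bij_betw_def internal_Cons_Node[OF assms]
    by (auto simp: inj_on_insert) (metis image_eqI)
qed

lemma proper_colouring_Cons_Node:
  assumes "cs \<noteq> []"
  shows "proper_colouring (Node cs # rest) L k c \<longleftrightarrow>
     c [0] \<in> allowed_colours (Node cs # rest) L k [0] \<and>
     proper_colouring (cs @ rest) (L \<circ> graft_addr (length cs)) k (c \<circ> graft_addr (length cs)) \<and>
     (\<forall>w. w \<notin> range (graft_addr (length cs)) \<and> w \<noteq> [0] \<longrightarrow> c w = Col 0)"
proof -
  have "(\<forall>v\<in>internal (Node cs # rest). c v \<in> allowed_colours (Node cs # rest) L k v) \<longleftrightarrow>
     c [0] \<in> allowed_colours (Node cs # rest) L k [0] \<and>
     (\<forall>v\<in>internal (cs @ rest).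
        c (graft_addr (length cs) v) \<in> allowed_colours (cs @ rest) (L \<circ> graft_addr (length cs)) k v)"
    using allowed_colours_graft_addr[OF assms] internal_nonempty
    by (auto simp: internal_Cons_Node[OF assms])
  then show ?thesis
    unfolding proper_colouring_iff_allowed vanishes_outside_internal_Cons_Node[OF assms] by auto
qed

lemma first_tree_nonleaf:
  assumes "v \<in> internal F" and "hd v = 0"
  obtains cs rest where "F = Node cs # rest" and "cs \<noteq> []"
proof -
  have v: "v \<in> verts F" "1 \<le> deg F v"
    using assms(1) unfolding internal_def by auto
  then obtain p where p: "v = 0 # p"
    using verts_hd_less_length[of v F] assms(2) by (cases v) auto
  obtain cs rest where F: "F = Node cs # rest"
    using verts_hd_less_length[OF v(1)] by (metis length_0_conv less_nat_zero_code neq_Nil_conv ptree.exhaust)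
  have "cs \<noteq> []"
  proof
    assume "cs = []"
    then have "fsub F v = (if p = [] then Some (Node []) else None)"
      using F p by (cases p) auto
    then show False
      using v unfolding verts_def deg_def by (auto split: if_splits)
  qed
  with F that show ?thesis by blast
qed

lemma proper_vertex_root_iff:
  assumes bij: "bij_betw L (internal F) \<Lambda>" and "finite \<Lambda>" and "[0] \<in> internal F"
    and min_first: "\<forall>v\<in>internal F. L v = Min \<Lambda> \<longrightarrow> hd v = 0"
  shows "proper_vertex F L [0] \<longleftrightarrow> L [0] = Min \<Lambda>"
proof -
  have label_in: "L w \<in> \<Lambda>" if "w \<in> internal F" for w
    using bij that by (auto dest: bij_betw_apply)
  then have "\<Lambda> \<noteq> {}"
    using assms(3) by blast
  then obtain v where v: "v \<in> internal F" "L v = Min \<Lambda>"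
    using bij Min_in[OF assms(2)] unfolding bij_betw_def by (metis imageE)
  then obtain p where "v = 0 # p"
    using min_first internal_nonempty by (metis list.collapse)
  then have "descendant v [0]"
    by (simp add: descendant_def)
  then have "proper_vertex F L [0] \<Longrightarrow> L [0] \<le> Min \<Lambda>"
    using v unfolding proper_vertex_def by auto
  moreover have "Min \<Lambda> \<le> L [0]" and "\<And>w. w \<in> internal F \<Longrightarrow> Min \<Lambda> \<le> L w"
    using label_in assms(2,3) by auto
  ultimately show ?thesis
    unfolding proper_vertex_def by (metis order_antisym)
qed

lemma min_in_first_tree_Cons_Node_iff:
  assumes "cs \<noteq> []" and bij: "bij_betw L (internal (Node cs # rest)) \<Lambda>" and "finite \<Lambda>"
  shows "(\<forall>v\<in>internal (Node cs # rest). L v = Min \<Lambda> \<longrightarrow> hd v = 0) \<longleftrightarrow>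
     (L [0] \<noteq> Min \<Lambda> \<longrightarrow> (\<forall>u\<in>internal (cs @ rest).
        L (graft_addr (length cs) u) = Min (\<Lambda> - {L [0]}) \<longrightarrow> hd u < length cs))"
proof -
  let ?g = "graft_addr (length cs)"
  have sub: "L [0] \<in> \<Lambda>" "bij_betw (L \<circ> ?g) (internal (cs @ rest)) (\<Lambda> - {L [0]})"
    using bij bij_betw_Cons_Node[OF assms(1)] by auto
  have "(\<forall>v\<in>internal (Node cs # rest). L v = Min \<Lambda> \<longrightarrow> hd v = 0) \<longleftrightarrow>
      (\<forall>u\<in>internal (cs @ rest). L (?g u) = Min \<Lambda> \<longrightarrow> hd u < length cs)"
    using internal_nonempty hd_graft_addr_eq_0_iff by (auto simp: internal_Cons_Node[OF assms(1)])
  moreover have "Min (\<Lambda> - {L [0]}) = Min \<Lambda>" if "L [0] \<noteq> Min \<Lambda>"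
    using that sub(1) assms(3) by (metis Diff_iff Min_eqI Min_in Min_le empty_iff finite_Diff singletonD)
  moreover have "L (?g u) \<noteq> Min \<Lambda>" if "L [0] = Min \<Lambda>" "u \<in> internal (cs @ rest)" for u
    using that sub(2) by (auto dest: bij_betw_apply)
  ultimately show ?thesis
    by metis
qed

section \<open>Coloured forests on an arbitrary label set\<close>

type_synonym cforest = "ptree list \<times> (nat list \<Rightarrow> nat) \<times> (nat list \<Rightarrow> colour)"

locale coloured_forests =
  fixes D :: "nat \<Rightarrow> nat" and r0 k :: nat
begin

text \<open>The \<open>k\<close>-coloured labelled forests of the paper with \<open>r0\<close> leaves, their labels
  drawn from a finite set \<open>\<Lambda>\<close> instead of \<open>[n]\<close>, and a vertex labelled \<open>x\<close> having
  \<open>D x\<close> children (so \<open>D\<close> plays the role of \<open>S\<close>).\<close>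

definition cforests :: "nat set \<Rightarrow> cforest set" where
  "cforests \<Lambda> = {(F, L, c). card {v \<in> verts F. deg F v = 0} = r0 \<and> bij_betw L (internal F) \<Lambda>
     \<and> (\<forall>v. v \<notin> internal F \<longrightarrow> L v = 0) \<and> (\<forall>v\<in>internal F. deg F v = D (L v))
     \<and> proper_colouring F L k c}"

definition cforests_min_in :: "nat set \<Rightarrow> (nat \<Rightarrow> bool) \<Rightarrow> cforest set" where
  "cforests_min_in \<Lambda> P = {(F, L, c) \<in> cforests \<Lambda>. \<forall>v\<in>internal F. L v = Min \<Lambda> \<longrightarrow> P (hd v)}"

definition num_trees :: "nat set \<Rightarrow> nat" where
  "num_trees \<Lambda> = r0 + card \<Lambda> - (\<Sum>x\<in>\<Lambda>. D x)"

lemma cforests_min_in_subset: "cforests_min_in \<Lambda> P \<subseteq> cforests \<Lambda>"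
  unfolding cforests_min_in_def by auto

lemma length_cforest:
  assumes "(F, L, c) \<in> cforests \<Lambda>" and "finite \<Lambda>"
  shows "length F + (\<Sum>x\<in>\<Lambda>. D x) = r0 + card \<Lambda>"
proof -
  have leaves: "card {v \<in> verts F. deg F v = 0} = r0" and bij: "bij_betw L (internal F) \<Lambda>"
    and deg: "\<forall>v\<in>internal F. deg F v = D (L v)"
    using assms(1) unfolding cforests_def by auto
  have split: "verts F = {v \<in> verts F. deg F v = 0} \<union> internal F"
    and disj: "{v \<in> verts F. deg F v = 0} \<inter> internal F = {}"
    unfolding internal_def by auto
  have fin: "finite {v \<in> verts F. deg F v = 0}" "finite (internal F)"
    using finite_verts[of F] by (auto simp: internal_def)
  have "card (verts F) = r0 + card \<Lambda>"
    using card_Un_disjoint[OF fin disj] leaves bij_betw_same_card[OF bij] split by simp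
  moreover have "(\<Sum>v\<in>verts F. deg F v) = (\<Sum>v\<in>internal F. deg F v)"
    using sum.union_disjoint[OF fin disj, of "deg F"] split by simp
  moreover have "\<dots> = (\<Sum>x\<in>\<Lambda>. D x)"
    using deg sum.reindex_bij_betw[OF bij, of D] by simp
  ultimately show ?thesis
    using sum_deg_verts[of F] by simp
qed

lemma length_cforest_eq_num_trees:
  "(F, L, c) \<in> cforests \<Lambda> \<Longrightarrow> finite \<Lambda> \<Longrightarrow> length F = num_trees \<Lambda>"
  using length_cforest unfolding num_trees_def by fastforce

lemma D_le_num_trees_remove:
  assumes "finite \<Lambda>" and "a \<in> \<Lambda>" and "(\<Sum>x\<in>\<Lambda>. D x) < r0 + card \<Lambda>"
  shows "D a \<le> num_trees (\<Lambda> - {a})"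
proof -
  have "(\<Sum>x\<in>\<Lambda>. D x) = D a + (\<Sum>x\<in>\<Lambda> - {a}. D x)"
    using sum.remove[OF assms(1,2)] .
  moreover have "card \<Lambda> = Suc (card (\<Lambda> - {a}))"
    using card.remove[OF assms(1,2)] .
  ultimately show ?thesis
    using assms(3) unfolding num_trees_def by linarith
qed

lemma sum_D_remove_less:
  assumes "finite \<Lambda>" and "a \<in> \<Lambda>" and "1 \<le> D a" and "(\<Sum>x\<in>\<Lambda>. D x) < r0 + card \<Lambda>"
  shows "(\<Sum>x\<in>\<Lambda> - {a}. D x) < r0 + card (\<Lambda> - {a})"
proof -
  have "(\<Sum>x\<in>\<Lambda>. D x) = D a + (\<Sum>x\<in>\<Lambda> - {a}. D x)"
    using sum.remove[OF assms(1,2)] .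
  moreover have "card \<Lambda> = Suc (card (\<Lambda> - {a}))"
    using card.remove[OF assms(1,2)] .
  ultimately show ?thesis
    using assms(3,4) by linarith
qed

lemma cforests_Cons_Node_iff:
  assumes "cs \<noteq> []"
  shows "(Node cs # rest, L, c) \<in> cforests \<Lambda> \<longleftrightarrow>
     L [0] \<in> \<Lambda> \<and> D (L [0]) = length cs \<and> c [0] \<in> allowed_colours (Node cs # rest) L k [0] \<and>
     (cs @ rest, L \<circ> graft_addr (length cs), c \<circ> graft_addr (length cs)) \<in> cforests (\<Lambda> - {L [0]}) \<and>
     (\<forall>w. w \<notin> range (graft_addr (length cs)) \<and> w \<noteq> [0] \<longrightarrow> L w = 0 \<and> c w = Col 0)"
proof -
  have "(\<forall>v\<in>internal (Node cs # rest). deg (Node cs # rest) v = D (L v)) \<longleftrightarrow>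
     D (L [0]) = length cs \<and>
     (\<forall>v\<in>internal (cs @ rest). deg (cs @ rest) v = D ((L \<circ> graft_addr (length cs)) v))"
    by (auto simp: internal_Cons_Node[OF assms] deg_graft_addr deg_root)
  then show ?thesis
    unfolding cforests_def
    by (auto simp: leaves_Cons_Node[OF assms] bij_betw_Cons_Node[OF assms]
        vanishes_outside_internal_Cons_Node[OF assms] proper_colouring_Cons_Node[OF assms])
qed

definition root_colours :: "nat set \<Rightarrow> nat \<Rightarrow> colour set" where
  "root_colours \<Lambda> a = (if a = Min \<Lambda> then Col ` {1..D a} else Col ` {1..D a} \<union> Col' ` {1..k})"

text \<open>If the root label \<open>a\<close> is not the least label, the least label must lie below the root,
  i.e.\ in one of the first \<open>D a\<close> trees of the detached forest.\<close>

definition detached_forests :: "nat set \<Rightarrow> nat \<Rightarrow> cforest set" where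
  "detached_forests \<Lambda> a = (if a = Min \<Lambda> then cforests (\<Lambda> - {a})
     else cforests_min_in (\<Lambda> - {a}) (\<lambda>i. i < D a))"

lemma cforests_min_in_first_Cons_Node_iff:
  assumes "cs \<noteq> []" and "finite \<Lambda>"
  shows "(Node cs # rest, L, c) \<in> cforests_min_in \<Lambda> (\<lambda>i. i = 0) \<longleftrightarrow>
     L [0] \<in> \<Lambda> \<and> D (L [0]) = length cs \<and> c [0] \<in> root_colours \<Lambda> (L [0]) \<and>
     (cs @ rest, L \<circ> graft_addr (length cs), c \<circ> graft_addr (length cs)) \<in> detached_forests \<Lambda> (L [0]) \<and>
     (\<forall>w. w \<notin> range (graft_addr (length cs)) \<and> w \<noteq> [0] \<longrightarrow> L w = 0 \<and> c w = Col 0)"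
proof -
  let ?F = "Node cs # rest" and ?a = "L [0]" and ?g = "graft_addr (length cs)"
  let ?y' = "(cs @ rest, L \<circ> ?g, c \<circ> ?g)"
  let ?lhs = "(?F, L, c) \<in> cforests_min_in \<Lambda> (\<lambda>i. i = 0)"
  let ?root = "?a \<in> \<Lambda> \<and> D ?a = length cs" and ?colour = "c [0] \<in> root_colours \<Lambda> ?a"
  let ?detached = "?y' \<in> detached_forests \<Lambda> ?a"
  let ?outside = "\<forall>w. w \<notin> range ?g \<and> w \<noteq> [0] \<longrightarrow> L w = 0 \<and> c w = Col 0"
  let ?min_first = "\<forall>v\<in>internal ?F. L v = Min \<Lambda> \<longrightarrow> hd v = 0"
  have lhs: "?lhs \<longleftrightarrow> (?root \<and> ?y' \<in> cforests (\<Lambda> - {?a}) \<and> ?outside) \<and>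
      c [0] \<in> allowed_colours ?F L k [0] \<and> ?min_first"
    unfolding cforests_min_in_def mem_Collect_eq prod.case cforests_Cons_Node_iff[OF assms(1)] by blast
  have "?min_first \<longleftrightarrow> ?detached" and "?min_first \<Longrightarrow> ?colour \<longleftrightarrow> c [0] \<in> allowed_colours ?F L k [0]"
    if root: ?root and y': "?y' \<in> cforests (\<Lambda> - {?a})"
  proof -
    have bij: "bij_betw L (internal ?F) \<Lambda>"
      using root y' bij_betw_Cons_Node[OF assms(1)] unfolding cforests_def by blast
    show "?min_first \<longleftrightarrow> ?detached"
      using root y' unfolding min_in_first_tree_Cons_Node_iff[OF assms(1) bij assms(2)]
      by (auto simp: detached_forests_def cforests_min_in_def)
    assume ?min_first
    then have "proper_vertex ?F L [0] \<longleftrightarrow> ?a = Min \<Lambda>"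
      using proper_vertex_root_iff[OF bij assms(2)] internal_Cons_Node[OF assms(1)] by blast
    then show "?colour \<longleftrightarrow> c [0] \<in> allowed_colours ?F L k [0]"
      using root by (auto simp: allowed_colours_def root_colours_def deg_root)
  qed
  moreover have "?detached \<Longrightarrow> ?y' \<in> cforests (\<Lambda> - {?a})"
    using cforests_min_in_subset by (auto simp: detached_forests_def split: if_splits)
  ultimately show ?thesis
    using lhs by blast
qed

lemma min_label_vertex:
  assumes "(F, L, c) \<in> cforests \<Lambda>" and "finite \<Lambda>" and "\<Lambda> \<noteq> {}"
  obtains v where "v \<in> internal F" and "L v = Min \<Lambda>"
    and "\<And>w. w \<in> internal F \<Longrightarrow> L w = Min \<Lambda> \<Longrightarrow> w = v"
proof -
  have bij: "bij_betw L (internal F) \<Lambda>"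
    using assms(1) unfolding cforests_def by blast
  then obtain v where "v \<in> internal F" "L v = Min \<Lambda>"
    using Min_in[OF assms(2,3)] unfolding bij_betw_def by (metis imageE)
  moreover have "w = v" if "w \<in> internal F" "L w = Min \<Lambda>" for w
    using bij_betw_imp_inj_on[OF bij] that \<open>v \<in> internal F\<close> \<open>L v = Min \<Lambda>\<close>
    by (metis inj_onD)
  ultimately show ?thesis
    using that by blast
qed

fun detach_root :: "cforest \<Rightarrow> nat \<times> colour \<times> cforest" where
  "detach_root (F, L, c) = (L [0], c [0], kids (hd F) @ tl F,
     L \<circ> graft_addr (length (kids (hd F))), c \<circ> graft_addr (length (kids (hd F))))"

fun attach_root :: "nat \<times> colour \<times> cforest \<Rightarrow> cforest" where
  "attach_root (a, g, F', L', c') = (Node (take (D a) F') # drop (D a) F',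
     graft_fun (D a) a L' 0, graft_fun (D a) g c' (Col 0))"

lemma first_tree_of_min_in_first:
  assumes "(F, L, c) \<in> cforests_min_in \<Lambda> (\<lambda>i. i = 0)" and "finite \<Lambda>" and "\<Lambda> \<noteq> {}"
  obtains cs rest where "F = Node cs # rest" and "cs \<noteq> []"
proof -
  have "(F, L, c) \<in> cforests \<Lambda>"
    using assms(1) cforests_min_in_subset by blast
  then obtain v where "v \<in> internal F" "L v = Min \<Lambda>"
    using assms(2,3) by (rule min_label_vertex) blast
  then show ?thesis
    using assms(1) first_tree_nonleaf that unfolding cforests_min_in_def by blast
qed

lemma attach_detach_root:
  assumes y: "y \<in> cforests_min_in \<Lambda> (\<lambda>i. i = 0)" and "finite \<Lambda>" and "\<Lambda> \<noteq> {}"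
  shows "attach_root (detach_root y) = y"
    and "detach_root y \<in> (SIGMA a:\<Lambda>. root_colours \<Lambda> a \<times> detached_forests \<Lambda> a)"
proof -
  obtain F L c where yy: "y = (F, L, c)"
    by (cases y)
  then obtain cs rest where F: "F = Node cs # rest" and "cs \<noteq> []"
    using first_tree_of_min_in_first assms by blast
  note root = y[unfolded yy F cforests_min_in_first_Cons_Node_iff[OF \<open>cs \<noteq> []\<close> assms(2)]]
  show "attach_root (detach_root y) = y"
    using root by (simp add: yy F graft_fun_eq_iff)
  show "detach_root y \<in> (SIGMA a:\<Lambda>. root_colours \<Lambda> a \<times> detached_forests \<Lambda> a)"
    using root by (simp add: yy F)
qed

lemma detach_attach_root:
  assumes x: "x \<in> (SIGMA a:\<Lambda>. root_colours \<Lambda> a \<times> detached_forests \<Lambda> a)" and "finite \<Lambda>"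
    and "\<forall>x\<in>\<Lambda>. 1 \<le> D x" and "(\<Sum>x\<in>\<Lambda>. D x) < r0 + card \<Lambda>"
  shows "detach_root (attach_root x) = x" and "attach_root x \<in> cforests_min_in \<Lambda> (\<lambda>i. i = 0)"
proof -
  obtain a g F' L' c' where xx: "x = (a, g, F', L', c')"
    by (cases x)
  then have a: "a \<in> \<Lambda>" and "(F', L', c') \<in> cforests (\<Lambda> - {a})"
    using x cforests_min_in_subset by (auto simp: detached_forests_def split: if_splits)
  then have "length F' = num_trees (\<Lambda> - {a})"
    using assms(2) by (simp add: length_cforest_eq_num_trees)
  then have "1 \<le> D a" and "D a \<le> length F'"
    using a assms(3) D_le_num_trees_remove[OF assms(2) a assms(4)] by auto
  then have cs: "take (D a) F' \<noteq> []" "length (take (D a) F') = D a"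
    by auto
  show "detach_root (attach_root x) = x"
    using cs by (simp add: xx)
  show "attach_root x \<in> cforests_min_in \<Lambda> (\<lambda>i. i = 0)"
    using x cs unfolding xx attach_root.simps cforests_min_in_first_Cons_Node_iff[OF cs(1) assms(2)]
    by (simp add: graft_fun_def)
qed

lemma bij_betw_detach_root:
  assumes "finite \<Lambda>" and "\<Lambda> \<noteq> {}" and "\<forall>x\<in>\<Lambda>. 1 \<le> D x" and "(\<Sum>x\<in>\<Lambda>. D x) < r0 + card \<Lambda>"
  shows "bij_betw detach_root (cforests_min_in \<Lambda> (\<lambda>i. i = 0))
           (SIGMA a:\<Lambda>. root_colours \<Lambda> a \<times> detached_forests \<Lambda> a)"
  using attach_detach_root[OF _ assms(1,2)] detach_attach_root[OF _ assms(1,3,4)]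
  by (intro bij_betw_byWitness[where f' = attach_root]) blast+

lemma cforests_transfer:
  assumes h: "bij h" and fsub: "\<And>v. fsub F' v = fsub F (h v)"
    and prefix: "\<And>u v. prefix (h u) (h v) \<longleftrightarrow> prefix u v"
    and y: "(F, L, c) \<in> cforests \<Lambda>"
  shows "(F', L \<circ> h, c \<circ> h) \<in> cforests \<Lambda>"
proof -
  note internal = fsub_transfer_internal[OF fsub] and deg = fsub_transfer_verts_deg(2)[OF fsub]
  have vimage: "bij_betw h (h -` A) A" for A
    using h unfolding bij_def bij_betw_def by (meson inj_on_subset subset_UNIV surj_image_vimage_eq)
  have leaves: "card {v \<in> verts F. deg F v = 0} = r0" and bij: "bij_betw L (internal F) \<Lambda>"
    and zero: "\<forall>v. v \<notin> internal F \<longrightarrow> L v = 0" and degs: "\<forall>v\<in>internal F. deg F v = D (L v)"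
    and colouring: "proper_colouring F L k c"
    using y unfolding cforests_def by blast+
  have allowed: "allowed_colours F' (L \<circ> h) k v = allowed_colours F L k (h v)" for v
    unfolding allowed_colours_def fsub_transfer_proper_vertex[OF bij_is_surj[OF h] fsub prefix] deg ..
  have leaves_vimage: "{v \<in> verts F'. deg F' v = 0} = h -` {v \<in> verts F. deg F v = 0}"
    using fsub_transfer_verts_deg[OF fsub] by auto
  have "card {v \<in> verts F'. deg F' v = 0} = r0"
    unfolding leaves_vimage bij_betw_same_card[OF vimage] by (rule leaves)
  moreover have "bij_betw (L \<circ> h) (internal F') \<Lambda>"
    unfolding internal using bij_betw_trans[OF vimage bij] .
  moreover have "\<forall>v. v \<notin> internal F' \<longrightarrow> (L \<circ> h) v = 0"
    using zero internal by simp
  moreover have "\<forall>v\<in>internal F'. deg F' v = D ((L \<circ> h) v)"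
    using degs internal deg by simp
  moreover have "proper_colouring F' (L \<circ> h) k (c \<circ> h)"
    using colouring unfolding proper_colouring_iff_allowed internal allowed by simp
  ultimately show ?thesis
    unfolding cforests_def by simp
qed

fun swap_cforest :: "nat \<Rightarrow> cforest \<Rightarrow> cforest" where
  "swap_cforest t (F, L, c) = (swap_trees t F, L \<circ> swap_root_addr t, c \<circ> swap_root_addr t)"

lemma swap_cforest_involutory:
  "t < length F \<Longrightarrow> swap_cforest t (swap_cforest t (F, L, c)) = (F, L, c)"
  by (simp add: swap_trees_involutory comp_assoc[symmetric] fun_eq_iff)

lemma swap_cforest_min_in:
  assumes y: "(F, L, c) \<in> cforests_min_in \<Lambda> P" and t: "t < length F"
  shows "swap_cforest t (F, L, c) \<in> cforests_min_in \<Lambda> (P \<circ> transpose 0 t)"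
proof -
  have fsub: "fsub (swap_trees t F) v = fsub F (swap_root_addr t v)" for v
    using fsub_swap_trees[OF t] .
  have "(swap_trees t F, L \<circ> swap_root_addr t, c \<circ> swap_root_addr t) \<in> cforests \<Lambda>"
    using cforests_transfer[OF bij_swap_root_addr fsub prefix_swap_root_addr_iff] y
    unfolding cforests_min_in_def by blast
  moreover have "P (transpose 0 t (hd v))"
    if "v \<in> internal (swap_trees t F)" "L (swap_root_addr t v) = Min \<Lambda>" for v
  proof -
    have "swap_root_addr t v \<in> internal F"
      using that(1) fsub_transfer_internal[OF fsub] by blast
    moreover have "v \<noteq> []"
      using that(1) internal_nonempty by blast
    ultimately show ?thesis
      using y that(2) unfolding cforests_min_in_def by (cases v) auto
  qed
  ultimately show ?thesis
    by (simp add: cforests_min_in_def)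
qed

lemma bij_betw_swap_cforest:
  assumes "finite \<Lambda>" and "t < num_trees \<Lambda>"
  shows "bij_betw (swap_cforest t) (cforests_min_in \<Lambda> (\<lambda>i. i = t)) (cforests_min_in \<Lambda> (\<lambda>i. i = 0))"
proof -
  have swap: "swap_cforest t (swap_cforest t y) = y \<and> swap_cforest t y \<in> cforests_min_in \<Lambda> (P \<circ> transpose 0 t)"
    if "y \<in> cforests_min_in \<Lambda> P" for y P
  proof -
    obtain F L c where yy: "y = (F, L, c)"
      by (cases y)
    then have "(F, L, c) \<in> cforests \<Lambda>"
      using that cforests_min_in_subset by blast
    then have "t < length F"
      using assms length_cforest_eq_num_trees by simp
    then show ?thesis
      using that swap_cforest_involutory swap_cforest_min_in unfolding yy by blast
  qed
  have "(\<lambda>i. i = t) \<circ> transpose 0 t = (\<lambda>i. i = 0)" and "(\<lambda>i. i = 0) \<circ> transpose 0 t = (\<lambda>i. i = t)"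
    by (auto simp: fun_eq_iff transpose_eq_iff)
  then show ?thesis
    using swap[where P = "\<lambda>i. i = t"] swap[where P = "\<lambda>i. i = 0"]
    by (intro bij_betw_byWitness[where f' = "swap_cforest t"]) auto
qed

lemma cforests_min_in_less_eq_UN:
  assumes "finite \<Lambda>" and "\<Lambda> \<noteq> {}"
  shows "cforests_min_in \<Lambda> (\<lambda>i. i < j) = (\<Union>t<j. cforests_min_in \<Lambda> (\<lambda>i. i = t))"
proof (intro equalityI subsetI)
  fix y assume y: "y \<in> cforests_min_in \<Lambda> (\<lambda>i. i < j)"
  obtain F L c where yy: "y = (F, L, c)"
    by (cases y)
  then have "(F, L, c) \<in> cforests \<Lambda>"
    using y cforests_min_in_subset by blast
  then obtain v where v: "v \<in> internal F" "L v = Min \<Lambda>"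
    and unique: "\<And>w. w \<in> internal F \<Longrightarrow> L w = Min \<Lambda> \<Longrightarrow> w = v"
    using assms by (rule min_label_vertex) blast
  have "\<forall>w\<in>internal F. L w = Min \<Lambda> \<longrightarrow> hd w = hd v"
    using unique by blast
  then have "y \<in> cforests_min_in \<Lambda> (\<lambda>i. i = hd v)"
    using y unfolding yy cforests_min_in_def by simp
  moreover have "hd v < j"
    using y v unfolding yy cforests_min_in_def by simp
  ultimately show "y \<in> (\<Union>t<j. cforests_min_in \<Lambda> (\<lambda>i. i = t))"
    by blast
qed (auto simp: cforests_min_in_def)

lemma cforests_min_in_disjoint:
  assumes "finite \<Lambda>" and "\<Lambda> \<noteq> {}" and "s \<noteq> t"
  shows "cforests_min_in \<Lambda> (\<lambda>i. i = s) \<inter> cforests_min_in \<Lambda> (\<lambda>i. i = t) = {}"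
proof (intro equals0I)
  fix y assume y: "y \<in> cforests_min_in \<Lambda> (\<lambda>i. i = s) \<inter> cforests_min_in \<Lambda> (\<lambda>i. i = t)"
  obtain F L c where yy: "y = (F, L, c)"
    by (cases y)
  then have "(F, L, c) \<in> cforests \<Lambda>"
    using y cforests_min_in_subset by blast
  then obtain v where "v \<in> internal F" "L v = Min \<Lambda>"
    using assms(1,2) by (rule min_label_vertex) blast
  then show False
    using y assms(3) unfolding yy cforests_min_in_def by auto
qed

lemma card_cforests_min_in_less:
  assumes "finite \<Lambda>" and "\<Lambda> \<noteq> {}" and fin0: "finite (cforests_min_in \<Lambda> (\<lambda>i. i = 0))"
    and "j \<le> num_trees \<Lambda>"
  shows "finite (cforests_min_in \<Lambda> (\<lambda>i. i < j))"
    and "card (cforests_min_in \<Lambda> (\<lambda>i. i < j)) = j * card (cforests_min_in \<Lambda> (\<lambda>i. i = 0))"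
proof -
  let ?Q = "\<lambda>t. cforests_min_in \<Lambda> (\<lambda>i. i = t)"
  have fin: "finite (?Q t)" and card: "card (?Q t) = card (?Q 0)" if "t < j" for t
  proof -
    have "bij_betw (swap_cforest t) (?Q t) (?Q 0)"
      using that assms(4) by (intro bij_betw_swap_cforest[OF assms(1)]) simp
    then show "finite (?Q t)" and "card (?Q t) = card (?Q 0)"
      using fin0 by (simp_all add: bij_betw_finite bij_betw_same_card)
  qed
  show "finite (cforests_min_in \<Lambda> (\<lambda>i. i < j))"
    unfolding cforests_min_in_less_eq_UN[OF assms(1,2)] using fin by simp
  have "card (\<Union>t<j. ?Q t) = (\<Sum>t<j. card (?Q t))"
    using fin cforests_min_in_disjoint[OF assms(1,2)] by (intro card_UN_disjoint) auto
  also have "\<dots> = (\<Sum>t<j. card (?Q 0))"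
    by (rule sum.cong[OF refl card]) simp
  finally show "card (cforests_min_in \<Lambda> (\<lambda>i. i < j)) = j * card (?Q 0)"
    unfolding cforests_min_in_less_eq_UN[OF assms(1,2)] by simp
qed

lemma cforests_eq_min_in_less_num_trees:
  assumes "finite \<Lambda>"
  shows "cforests \<Lambda> = cforests_min_in \<Lambda> (\<lambda>i. i < num_trees \<Lambda>)"
proof (intro equalityI subsetI)
  fix y assume y: "y \<in> cforests \<Lambda>"
  obtain F L c where yy: "y = (F, L, c)"
    by (cases y)
  have "length F = num_trees \<Lambda>"
    using y assms unfolding yy by (rule length_cforest_eq_num_trees)
  then have "hd v < num_trees \<Lambda>" if "v \<in> internal F" for v
    using verts_hd_less_length[OF internal_imp_verts[OF that]] by simp
  then show "y \<in> cforests_min_in \<Lambda> (\<lambda>i. i < num_trees \<Lambda>)"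
    using y unfolding yy cforests_min_in_def by blast
qed (rule cforests_min_in_subset[THEN subsetD])

lemma card_cforests_empty: "card (cforests {}) = 1"
proof -
  let ?F = "replicate r0 (Node [])"
  have "cforests {} = {(?F, \<lambda>_. 0, \<lambda>_. Col 0)}"
  proof (intro equalityI subsetI)
    fix y assume y: "y \<in> cforests {}"
    obtain F L c where yy: "y = (F, L, c)"
      by (cases y)
    have empty: "internal F = {}"
      using y unfolding yy cforests_def by (simp add: bij_betw_def)
    moreover have "length F = r0"
      using length_cforest[of F L c "{}"] y yy by simp
    ultimately have "F = ?F"
      using internal_empty_imp_replicate by metis
    moreover have "L = (\<lambda>_. 0)" and "c = (\<lambda>_. Col 0)"
      using y empty unfolding yy cforests_def proper_colouring_def by auto
    ultimately show "y \<in> {(?F, \<lambda>_. 0, \<lambda>_. Col 0)}"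
      using yy by simp
  next
    have empty: "internal ?F = {}"
      unfolding internal_def by simp
    have "card {v \<in> verts ?F. deg ?F v = 0} = r0"
      using sum_deg_verts[of ?F] by simp
    then show "y \<in> cforests {}" if "y \<in> {(?F, \<lambda>_. 0, \<lambda>_. Col 0)}" for y
      using that empty unfolding cforests_def proper_colouring_def by (simp add: bij_betw_def)
  qed
  then show ?thesis
    by simp
qed

lemma card_root_colours: "card (root_colours \<Lambda> a) = (if a = Min \<Lambda> then D a else D a + k)"
proof -
  have "card (Col ` {1..n}) = n" and "card (Col' ` {1..n}) = n" for n
    by (simp_all add: card_image inj_on_def)
  moreover have "Col ` {1..n} \<inter> Col' ` {1..m} = {}" for n m
    by auto
  ultimately show ?thesis
    unfolding root_colours_def by (simp add: card_Un_disjoint)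
qed

lemma finite_root_colours: "finite (root_colours \<Lambda> a)"
  unfolding root_colours_def by simp

lemma card_detached_forests:
  assumes "finite \<Lambda>" and "a \<in> \<Lambda>" and "\<Lambda> - {a} \<noteq> {}"
    and "finite (cforests_min_in (\<Lambda> - {a}) (\<lambda>i. i = 0))" and "(\<Sum>x\<in>\<Lambda>. D x) < r0 + card \<Lambda>"
  shows "finite (detached_forests \<Lambda> a)"
    and "card (detached_forests \<Lambda> a) = (if a = Min \<Lambda> then num_trees (\<Lambda> - {a}) else D a) *
           card (cforests_min_in (\<Lambda> - {a}) (\<lambda>i. i = 0))"
proof -
  have fin: "finite (\<Lambda> - {a})"
    using assms(1) by simp
  note less = card_cforests_min_in_less[OF fin assms(3,4)]
  let ?j = "if a = Min \<Lambda> then num_trees (\<Lambda> - {a}) else D a"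
  have "?j \<le> num_trees (\<Lambda> - {a})"
    using D_le_num_trees_remove[OF assms(1,2,5)] by simp
  moreover have "detached_forests \<Lambda> a = cforests_min_in (\<Lambda> - {a}) (\<lambda>i. i < ?j)"
    unfolding detached_forests_def cforests_eq_min_in_less_num_trees[OF fin] by simp
  ultimately show "finite (detached_forests \<Lambda> a)"
    and "card (detached_forests \<Lambda> a) = ?j * card (cforests_min_in (\<Lambda> - {a}) (\<lambda>i. i = 0))"
    using less by simp_all
qed

lemma card_min_in_first_eq_sum:
  assumes "finite \<Lambda>" and "\<Lambda> \<noteq> {}" and "\<forall>x\<in>\<Lambda>. 1 \<le> D x" and "(\<Sum>x\<in>\<Lambda>. D x) < r0 + card \<Lambda>"
    and "\<forall>a\<in>\<Lambda>. finite (detached_forests \<Lambda> a)"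
  shows "card (cforests_min_in \<Lambda> (\<lambda>i. i = 0))
       = (\<Sum>a\<in>\<Lambda>. card (root_colours \<Lambda> a) * card (detached_forests \<Lambda> a))"
  using bij_betw_same_card[OF bij_betw_detach_root[OF assms(1-4)]] assms(1,5)
  by (simp add: finite_root_colours card_cartesian_product)

lemma sum_root_weights:
  assumes "finite \<Lambda>" and "\<mu> \<in> \<Lambda>" and "(\<Sum>x\<in>\<Lambda>. D x) < r0 + card \<Lambda>"
  shows "(\<Sum>a\<in>\<Lambda>. if a = \<mu> then num_trees (\<Lambda> - {\<mu>}) else D a + k) = r0 + (card \<Lambda> - 1) * (1 + k)"
proof -
  have "(\<Sum>a\<in>\<Lambda> - {\<mu>}. if a = \<mu> then num_trees (\<Lambda> - {\<mu>}) else D a + k)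
      = (\<Sum>a\<in>\<Lambda> - {\<mu>}. D a + k)"
    by (rule sum.cong) auto
  then have "(\<Sum>a\<in>\<Lambda>. if a = \<mu> then num_trees (\<Lambda> - {\<mu>}) else D a + k)
      = num_trees (\<Lambda> - {\<mu>}) + (\<Sum>a\<in>\<Lambda> - {\<mu>}. D a + k)"
    using sum.remove[OF assms(1,2), of "\<lambda>a. if a = \<mu> then num_trees (\<Lambda> - {\<mu>}) else D a + k"] by simp
  also have "\<dots> = num_trees (\<Lambda> - {\<mu>}) + (\<Sum>a\<in>\<Lambda> - {\<mu>}. D a) + (card \<Lambda> - 1) * k"
    using assms(1,2) by (simp add: sum.distrib)
  also have "num_trees (\<Lambda> - {\<mu>}) + (\<Sum>a\<in>\<Lambda> - {\<mu>}. D a) = r0 + (card \<Lambda> - 1)"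
  proof -
    have "(\<Sum>x\<in>\<Lambda>. D x) = D \<mu> + (\<Sum>x\<in>\<Lambda> - {\<mu>}. D x)"
      using sum.remove[OF assms(1,2)] .
    moreover have "card \<Lambda> = Suc (card (\<Lambda> - {\<mu>}))"
      using card.remove[OF assms(1,2)] .
    ultimately show ?thesis
      using assms(3) unfolding num_trees_def by linarith
  qed
  finally show ?thesis
    by (simp only: distrib_left mult_1_right add.assoc)
qed

lemma card_min_in_first_singleton:
  assumes "1 \<le> D a" and "D a < r0 + 1"
  shows "card (cforests_min_in {a} (\<lambda>i. i = 0)) = D a"
proof -
  have "detached_forests {a} a = cforests {}"
    by (simp add: detached_forests_def)
  then have "card (detached_forests {a} a) = 1" and "finite (detached_forests {a} a)"
    using card_cforests_empty by (simp_all add: card_ge_0_finite)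
  then show ?thesis
    using card_min_in_first_eq_sum[of "{a}"] card_root_colours[of "{a}" a] assms by simp
qed

lemma card_min_in_first_step:
  assumes fin: "finite \<Lambda>" and "\<Lambda> \<noteq> {}" and pos: "\<forall>x\<in>\<Lambda>. 1 \<le> D x"
    and trees: "(\<Sum>x\<in>\<Lambda>. D x) < r0 + card \<Lambda>" and "0 < P"
    and smaller: "\<And>a. a \<in> \<Lambda> \<Longrightarrow> \<Lambda> - {a} \<noteq> {} \<and>
       card (cforests_min_in (\<Lambda> - {a}) (\<lambda>i. i = 0)) = (\<Prod>x\<in>\<Lambda> - {a}. D x) * P"
  shows "card (cforests_min_in \<Lambda> (\<lambda>i. i = 0)) = (\<Prod>x\<in>\<Lambda>. D x) * P * (r0 + (card \<Lambda> - 1) * (1 + k))"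
proof -
  define \<mu> where "\<mu> = Min \<Lambda>"
  have \<mu>: "\<mu> \<in> \<Lambda>"
    unfolding \<mu>_def using fin \<open>\<Lambda> \<noteq> {}\<close> by simp
  have summand: "finite (detached_forests \<Lambda> a) \<and>
      card (root_colours \<Lambda> a) * card (detached_forests \<Lambda> a)
        = (if a = \<mu> then num_trees (\<Lambda> - {\<mu>}) else D a + k) * ((\<Prod>x\<in>\<Lambda>. D x) * P)"
    if a: "a \<in> \<Lambda>" for a
  proof -
    \<comment> \<open>finiteness comes for free: the cardinality given by induction is positive\<close>
    have "0 < (\<Prod>x\<in>\<Lambda> - {a}. D x)"
      using pos by (auto intro!: prod_pos)
    then have "finite (cforests_min_in (\<Lambda> - {a}) (\<lambda>i. i = 0))"
      using smaller[OF a] \<open>0 < P\<close> by (intro card_ge_0_finite) simp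
    note detached = card_detached_forests[OF fin a conjunct1[OF smaller[OF a]] this trees]
    have "(\<Prod>x\<in>\<Lambda>. D x) = D a * (\<Prod>x\<in>\<Lambda> - {a}. D x)"
      using prod.remove[OF fin a] .
    then show ?thesis
      using detached smaller[OF a] card_root_colours[of \<Lambda> a] unfolding \<mu>_def
      by (cases "a = Min \<Lambda>") (simp_all add: ac_simps)
  qed
  have "card (cforests_min_in \<Lambda> (\<lambda>i. i = 0))
      = (\<Sum>a\<in>\<Lambda>. card (root_colours \<Lambda> a) * card (detached_forests \<Lambda> a))"
    using card_min_in_first_eq_sum[OF fin \<open>\<Lambda> \<noteq> {}\<close> pos trees] summand by blast
  also have "\<dots> = (\<Sum>a\<in>\<Lambda>. (if a = \<mu> then num_trees (\<Lambda> - {\<mu>}) else D a + k) * ((\<Prod>x\<in>\<Lambda>. D x) * P))"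
    using summand by (intro sum.cong) simp_all
  also have "\<dots> = (\<Sum>a\<in>\<Lambda>. if a = \<mu> then num_trees (\<Lambda> - {\<mu>}) else D a + k) * ((\<Prod>x\<in>\<Lambda>. D x) * P)"
    by (rule sum_distrib_right[symmetric])
  also have "\<dots> = (\<Prod>x\<in>\<Lambda>. D x) * P * (r0 + (card \<Lambda> - 1) * (1 + k))"
    unfolding sum_root_weights[OF fin \<mu> trees] by (simp add: mult_ac)
  finally show ?thesis .
qed

theorem card_cforests_min_in_first:
  assumes "finite \<Lambda>" and "\<Lambda> \<noteq> {}" and "\<forall>x\<in>\<Lambda>. 1 \<le> D x" and "(\<Sum>x\<in>\<Lambda>. D x) < r0 + card \<Lambda>"
  shows "card (cforests_min_in \<Lambda> (\<lambda>i. i = 0))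
       = (\<Prod>x\<in>\<Lambda>. D x) * (\<Prod>i = 1..card \<Lambda> - 1. r0 + i * (1 + k))"
  using assms
proof (induction "card \<Lambda>" arbitrary: \<Lambda> rule: less_induct)
  case less
  note fin = less.prems(1) and pos = less.prems(3) and trees = less.prems(4)
  let ?P = "\<lambda>m. \<Prod>i = 1..m. r0 + i * (1 + k)"
  show ?case
  proof (cases "card \<Lambda> = 1")
    case True
    then obtain a where "\<Lambda> = {a}"
      by (rule card_1_singletonE)
    then show ?thesis
      using card_min_in_first_singleton pos trees by simp
  next
    case False
    then obtain n where card: "card \<Lambda> = Suc (Suc n)"
      using fin less.prems(2) by (metis One_nat_def card_0_eq not0_implies_Suc)
    have smaller: "\<Lambda> - {a} \<noteq> {} \<and> card (cforests_min_in (\<Lambda> - {a}) (\<lambda>i. i = 0)) = (\<Prod>x\<in>\<Lambda> - {a}. D x) * ?P n"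
      if a: "a \<in> \<Lambda>" for a
    proof -
      have card_a: "card (\<Lambda> - {a}) = Suc n"
        using card a by (simp add: card_Diff_singleton)
      then have "\<Lambda> - {a} \<noteq> {}"
        by (metis card.empty nat.distinct(1))
      moreover have "(\<Sum>x\<in>\<Lambda> - {a}. D x) < r0 + card (\<Lambda> - {a})"
        using sum_D_remove_less[OF fin a _ trees] pos a by simp
      ultimately show ?thesis
        using less.hyps[of "\<Lambda> - {a}"] fin pos card card_a by simp
    qed
    have "0 < ?P n"
      by (auto intro!: prod_pos)
    then have "card (cforests_min_in \<Lambda> (\<lambda>i. i = 0)) = (\<Prod>x\<in>\<Lambda>. D x) * ?P n * (r0 + Suc n * (1 + k))"
      using card_min_in_first_step[OF fin less.prems(2) pos trees _ smaller] card by simp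
    also have "\<dots> = (\<Prod>x\<in>\<Lambda>. D x) * ?P (Suc n)"
      by (simp add: algebra_simps)
    finally show ?thesis
      using card by simp
  qed
qed
end

section \<open>Back to the type \<open>r\<close> and the blocks \<open>S\<close>\<close>

definition part_index :: "(nat \<Rightarrow> nat set) \<Rightarrow> nat \<Rightarrow> nat" where
  "part_index S x = (THE d. 1 \<le> d \<and> x \<in> S d)"

lemma V_part_subset: "S \<in> V r \<Longrightarrow> 1 \<le> d \<Longrightarrow> S d \<subseteq> {1..nint r}"
  unfolding V_def by blast

lemma part_index_eq:
  assumes "S \<in> V r" and "1 \<le> d" and "x \<in> S d"
  shows "part_index S x = d"
  unfolding part_index_def
proof (rule the_equality)
  show "\<And>d'. 1 \<le> d' \<and> x \<in> S d' \<Longrightarrow> d' = d"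
    using assms unfolding V_def by blast
qed (use assms in simp)

lemma part_index_mem:
  assumes "S \<in> V r" and "x \<in> {1..nint r}"
  shows "1 \<le> part_index S x" and "x \<in> S (part_index S x)"
proof -
  obtain d where "1 \<le> d" "x \<in> S d"
    using assms unfolding V_def by blast
  then show "1 \<le> part_index S x" and "x \<in> S (part_index S x)"
    using part_index_eq[OF assms(1)] by simp_all
qed

lemma V_eq_UN_parts:
  assumes "S \<in> V r"
  shows "{1..nint r} = (\<Union>d\<in>{d. 1 \<le> d \<and> r d \<noteq> 0}. S d)"
proof -
  have "S d = {}" if "1 \<le> d" "r d = 0" for d
    using assms that finite_subset[OF V_part_subset[OF assms that(1)]] unfolding V_def by auto
  then show ?thesis
    using assms unfolding V_def by blast
qed

lemma prod_sum_part_index: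
  assumes fin: "finite {d. r d \<noteq> 0}" and S: "S \<in> V r"
  shows "(\<Prod>x\<in>{1..nint r}. part_index S x) = (\<Prod>d\<in>{d. 1 \<le> d \<and> r d \<noteq> 0}. d ^ r d)"
    and "(\<Sum>x\<in>{1..nint r}. part_index S x) = (\<Sum>d\<in>{d. 1 \<le> d \<and> r d \<noteq> 0}. d * r d)"
proof -
  let ?I = "{d. 1 \<le> d \<and> r d \<noteq> 0}"
  have finI: "finite ?I"
    using fin by (rule finite_subset[rotated]) auto
  have finS: "\<forall>d\<in>?I. finite (S d)"
    using finite_subset[OF V_part_subset[OF S]] by blast
  have disj: "\<forall>d\<in>?I. \<forall>d'\<in>?I. d \<noteq> d' \<longrightarrow> S d \<inter> S d' = {}"
    using S unfolding V_def by blast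
  have card: "card (S d) = r d" and const: "\<And>x. x \<in> S d \<Longrightarrow> part_index S x = d" if "d \<in> ?I" for d
    using S that part_index_eq[OF S] unfolding V_def by auto
  show "(\<Prod>x\<in>{1..nint r}. part_index S x) = (\<Prod>d\<in>?I. d ^ r d)"
    unfolding V_eq_UN_parts[OF S] prod.UNION_disjoint[OF finI finS disj]
    using card const by (intro prod.cong) simp_all
  show "(\<Sum>x\<in>{1..nint r}. part_index S x) = (\<Sum>d\<in>?I. d * r d)"
    unfolding V_eq_UN_parts[OF S] sum.UNION_disjoint[OF finI finS disj]
    using card const by (intro sum.cong) simp_all
qed

lemma labels_in_parts_iff_deg:
  assumes S: "S \<in> V r" and bij: "bij_betw L (internal F) {1..nint r}"
  shows "(\<forall>v\<in>internal F. L v \<in> S (deg F v)) \<longleftrightarrow> (\<forall>v\<in>internal F. deg F v = part_index S (L v))"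
proof -
  have "L v \<in> S (deg F v) \<longleftrightarrow> deg F v = part_index S (L v)" if "v \<in> internal F" for v
  proof -
    have "1 \<le> deg F v" and "L v \<in> {1..nint r}"
      using that bij unfolding internal_def by (auto dest: bij_betw_apply)
    then show ?thesis
      using part_index_eq[OF S] part_index_mem[OF S] by metis
  qed
  then show ?thesis
    by blast
qed

lemma has_type_iff_leaves:
  assumes S: "S \<in> V r" and bij: "bij_betw L (internal F) {1..nint r}"
    and deg: "\<forall>v\<in>internal F. deg F v = part_index S (L v)"
  shows "has_type F r \<longleftrightarrow> card {v \<in> verts F. deg F v = 0} = r 0"
proof -
  have "card {v \<in> verts F. deg F v = i} = r i" if i: "1 \<le> i" for i
  proof -
    let ?A = "{v \<in> internal F. deg F v = i}"
    have "L ` ?A \<subseteq> S i"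
    proof
      fix x assume "x \<in> L ` ?A"
      then obtain v where v: "v \<in> internal F" "deg F v = i" "x = L v"
        by blast
      then have "L v \<in> S (part_index S (L v))"
        using part_index_mem(2)[OF S] bij_betw_apply[OF bij] by blast
      moreover have "part_index S (L v) = i"
        using deg v by simp
      ultimately show "x \<in> S i"
        using v(3) by simp
    qed
    moreover have "S i \<subseteq> L ` ?A"
    proof
      fix x assume x: "x \<in> S i"
      then have "x \<in> L ` internal F"
        using V_part_subset[OF S i] bij_betw_imp_surj_on[OF bij] by blast
      then obtain v where v: "v \<in> internal F" "L v = x"
        by blast
      then have "deg F v = i"
        using deg part_index_eq[OF S i x] by simp
      then show "x \<in> L ` ?A"
        using v by blast
    qed
    moreover have "inj_on L ?A"
      using bij_betw_imp_inj_on[OF bij] by (rule inj_on_subset) auto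
    ultimately have "bij_betw L ?A (S i)"
      unfolding bij_betw_def by (simp add: subset_antisym)
    moreover have "card (S i) = r i"
      using S i by (simp add: V_def)
    ultimately have "card ?A = r i"
      by (simp add: bij_betw_same_card)
    moreover have "{v \<in> verts F. deg F v = i} = ?A"
      using i unfolding internal_def by auto
    ultimately show ?thesis
      by simp
  qed
  note positive = this
  show ?thesis
    unfolding has_type_def
  proof
    assume zero: "card {v \<in> verts F. deg F v = 0} = r 0"
    show "\<forall>i. card {v \<in> verts F. deg F v = i} = r i"
    proof
      fix i
      show "card {v \<in> verts F. deg F v = i} = r i"
        using zero positive[of i] by (cases i) simp_all
    qed
  qed blast
qed

lemma CFS1_eq_cforests_min_in:
  assumes S: "S \<in> V r" and n: "1 \<le> nint r"
  shows "CFS1 r k S = coloured_forests.cforests_min_in (part_index S) (r 0) k {1..nint r} (\<lambda>i. i = 0)"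
proof -
  have "Min {1..nint r} = 1"
    using n by (simp add: Min_eq_iff)
  moreover have "(\<forall>v\<in>internal F. L v \<in> S (deg F v)) \<and> has_type F r \<longleftrightarrow>
      (\<forall>v\<in>internal F. deg F v = part_index S (L v)) \<and> card {v \<in> verts F. deg F v = 0} = r 0"
    if "bij_betw L (internal F) {1..nint r}" for F L
    using labels_in_parts_iff_deg[OF S that] has_type_iff_leaves[OF S that] by blast
  ultimately show ?thesis
    unfolding CFS1_def CFS_def CF_def labelling_def coloured_forests.cforests_min_in_def
      coloured_forests.cforests_def
    by auto
qed

lemma sum_deg_less:
  assumes "int (r 0) - (\<Sum>d\<in>{d. 1 \<le> d \<and> r d \<noteq> 0}. (int d - 1) * int (r d)) \<ge> 1"
  shows "(\<Sum>d\<in>{d. 1 \<le> d \<and> r d \<noteq> 0}. d * r d) < r 0 + nint r"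
proof -
  let ?I = "{d. 1 \<le> d \<and> r d \<noteq> 0}"
  have "(\<Sum>d\<in>?I. (int d - 1) * int (r d)) = (\<Sum>d\<in>?I. int (d * r d)) - (\<Sum>d\<in>?I. int (r d))"
    by (simp add: algebra_simps sum_subtractf)
  then have "(\<Sum>d\<in>?I. (int d - 1) * int (r d)) = int (\<Sum>d\<in>?I. d * r d) - int (nint r)"
    unfolding nint_def by simp
  then show ?thesis
    using assms by linarith
qed

theorem mainTheorem7:
  fixes r :: "nat \<Rightarrow> nat" and k :: nat and S :: "nat \<Rightarrow> nat set"
  assumes "finite {d. r d \<noteq> 0}"
    and "nint r \<ge> 1"
    and "int (r 0) - (\<Sum>d \<in> {d. 1 \<le> d \<and> r d \<noteq> 0}. (int d - 1) * int (r d)) \<ge> 1"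
    and "S \<in> V r"
  shows "card (CFS1 r k S) =
           (\<Prod>d \<in> {d. 1 \<le> d \<and> r d \<noteq> 0}. d ^ r d) *
           (\<Prod>i = 1..nint r - 1. r 0 + i * (1 + k))"
proof -
  have "\<forall>x\<in>{1..nint r}. 1 \<le> part_index S x"
    using part_index_mem(1)[OF assms(4)] by blast
  moreover have "(\<Sum>x\<in>{1..nint r}. part_index S x) < r 0 + card {1..nint r}"
    using sum_deg_less[OF assms(3)] prod_sum_part_index(2)[OF assms(1,4)] by simp
  ultimately have "card (coloured_forests.cforests_min_in (part_index S) (r 0) k {1..nint r} (\<lambda>i. i = 0))
      = (\<Prod>x\<in>{1..nint r}. part_index S x) * (\<Prod>i = 1..card {1..nint r} - 1. r 0 + i * (1 + k))"
    using assms(2) by (intro coloured_forests.card_cforests_min_in_first) auto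
  then show ?thesis
    unfolding CFS1_eq_cforests_min_in[OF assms(4,2)] prod_sum_part_index(1)[OF assms(1,4)] by simp
qed

end
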